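(* Let $d\geq 1$. Every $d$-degenerate graph $G$ with $n$ vertices and $m\geq\binom{d}{2}$ edges satisfies $$c(G)\;\leq\; n+\frac{(2^d-1)m}{d}-\frac{(d-3)2^d+d+1}{2}.$$
   Context: All graphs are finite, simple and undirected. A graph $G$ is $d$-degenerate if every subgraph of $G$ has a vertex of degree at most $d$. A clique of a graph $G$ is a (possibly empty) set of pairwise adjacent vertices; $c(G)$ denotes the number of cliques of $G$ (including the empty clique, all single vertices and all edges). *)

theory Defs
  imports Complex_Main
begin

definition simple_graph :: "'a set \<Rightarrow> 'a set set \<Rightarrow> bool" where
  "simple_graph V E \<longleftrightarrow> finite V \<and> (\<forall>e\<in>E. e \<subseteq> V \<and> card e = 2)"

definition subgraph :: "'a set \<Rightarrow> 'a set set \<Rightarrow> 'a set \<Rightarrow> 'a set set \<Rightarrow> bool" where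
  "subgraph V' E' V E \<longleftrightarrow> V' \<subseteq> V \<and> E' \<subseteq> E \<and> (\<forall>e\<in>E'. e \<subseteq> V')"

definition degree :: "'a set set \<Rightarrow> 'a \<Rightarrow> nat" where
  "degree E v = card {e\<in>E. v \<in> e}"

definition degenerate :: "nat \<Rightarrow> 'a set \<Rightarrow> 'a set set \<Rightarrow> bool" where
  "degenerate d V E \<longleftrightarrow>
     (\<forall>V' E'. subgraph V' E' V E \<and> V' \<noteq> {} \<longrightarrow> (\<exists>v\<in>V'. degree E' v \<le> d))"

definition clique :: "'a set set \<Rightarrow> 'a set \<Rightarrow> bool" where
  "clique E K \<longleftrightarrow> (\<forall>u\<in>K. \<forall>v\<in>K. u \<noteq> v \<longrightarrow> {u, v} \<in> E)"

text \<open>Number of cliques, including the empty clique.\<close>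
definition num_cliques :: "'a set \<Rightarrow> 'a set set \<Rightarrow> nat" where
  "num_cliques V E = card {K. K \<subseteq> V \<and> clique E K}"

end

theory Submission
  imports Defs
begin

(*
  Let B_j(n, m) = n + (2^j - 1) m / j - ((j - 3) 2^j + j + 1) / 2, i.e. clique_bound j n m.
  By induction on n, every d-degenerate graph satisfies c(G) <= B_j(n, m) for some 1 <= j <= d:
  delete a vertex v of minimum degree k <= d; at most 2^k cliques contain v, and
  B_j(n - 1, m - k) + 2^k <= B_(max j k)(n, m). For k <= j this is the convexity estimate
  (2^k - 1)/k <= (2^j - 1)/j; for k > j one first raises j to k, using that B_i(n, m) increases
  in i while i (i + 1) <= 2m, which holds for i = k since the k + 1 vertices of the closed
  neighbourhood of v all have degree at least k. Finally m >= C(d, 2) allows raising j to d.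
*)

definition clique_bound :: "nat \<Rightarrow> nat \<Rightarrow> real \<Rightarrow> real" where
  "clique_bound j n m = real n + (2 ^ j - 1) * m / real j - ((real j - 3) * 2 ^ j + real j + 1) / 2"

lemma power_two_minus_one_div_mono:
  assumes "1 \<le> k" "k \<le> j"
  shows "(2 ^ k - 1) / real k \<le> ((2::real) ^ j - 1) / real j"
proof -
  define f :: "nat \<Rightarrow> real" where "f i = (2 ^ Suc i - 1) / real (Suc i)" for i
  have f_Suc: "f i \<le> f (Suc i)" for i
  proof -
    define x :: real where "x = 2 ^ Suc i"
    have "1 \<le> x"
      unfolding x_def by (rule one_le_power) simp
    then have "(x - 1) * (real i + 2) \<le> (2 * x - 1) * (real i + 1)"
      by (simp add: algebra_simps)
    then have "(x - 1) / (real i + 1) \<le> (2 * x - 1) / (real i + 2)"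
      by (simp add: divide_simps)
    then show ?thesis
      unfolding f_def x_def by (simp add: add.commute)
  qed
  have "f (k - 1) \<le> f (j - 1)"
    using assms by (intro lift_Suc_mono_le[of f, OF f_Suc]) simp
  then show ?thesis
    using assms unfolding f_def by simp
qed

lemma power_two_minus_one_le_chord:
  assumes "k \<le> j" "1 \<le> j"
  shows "(2::real) ^ k - 1 \<le> (2 ^ j - 1) * real k / real j"
proof (cases "k = 0")
  case False
  then have "(2 ^ k - 1) / real k \<le> ((2::real) ^ j - 1) / real j"
    using assms by (intro power_two_minus_one_div_mono) auto
  then show ?thesis using False assms by (simp add: divide_simps mult.commute)
qed simp

lemma clique_bound_le_Suc:
  assumes "1 \<le> i" "real i * (real i + 1) \<le> 2 * m"
  shows "clique_bound i n m \<le> clique_bound (Suc i) n m"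
proof -
  have "clique_bound (Suc i) n m - clique_bound i n m =
      ((real i - 1) * 2 ^ i + 1) * (m - real i * (real i + 1) / 2) / (real i * (real i + 1))"
    using assms(1) by (simp add: clique_bound_def divide_simps) (simp add: algebra_simps)
  moreover have "0 \<le> ((real i - 1) * 2 ^ i + 1) * (m - real i * (real i + 1) / 2) / (real i * (real i + 1))"
    using assms by (intro divide_nonneg_pos mult_nonneg_nonneg) auto
  ultimately show ?thesis by linarith
qed

lemma clique_bound_mono:
  assumes "1 \<le> i" "i \<le> l" "real l * (real l - 1) \<le> 2 * m"
  shows "clique_bound i n m \<le> clique_bound l n m"
  using assms(2,3)
proof (induction l rule: dec_induct)
  case (step l)
  have "real l * (real l + 1) \<le> 2 * m"
    using step.prems by (simp add: algebra_simps)
  moreover from this have "clique_bound i n m \<le> clique_bound l n m"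
    using step.IH by (simp add: algebra_simps)
  ultimately show ?case using clique_bound_le_Suc[of l m n] assms(1) step.hyps by linarith
qed simp

lemma clique_bound_add_vertex:
  assumes "1 \<le> j" "real k * (real k + 1) \<le> 2 * m"
  shows "clique_bound j n (m - real k) + 2 ^ k \<le> clique_bound (max j k) (Suc n) m"
proof -
  let ?l = "max j k"
  have "clique_bound j n (m - real k) \<le> clique_bound ?l n (m - real k)"
  proof (cases "k \<le> j")
    case False
    then show ?thesis
      using assms by (intro clique_bound_mono) (auto simp: algebra_simps)
  qed simp
  moreover have "clique_bound ?l (Suc n) m - clique_bound ?l n (m - real k) =
      1 + (2 ^ ?l - 1) * real k / real ?l"
    using assms(1) by (simp add: clique_bound_def field_simps)
  moreover have "(2::real) ^ k - 1 \<le> (2 ^ ?l - 1) * real k / real ?l"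
    using assms(1) by (intro power_two_minus_one_le_chord) auto
  ultimately show ?thesis by linarith
qed

definition neighbours :: "'a set set \<Rightarrow> 'a \<Rightarrow> 'a set" where
  "neighbours E v = {u. {v, u} \<in> E}"

lemma simple_graph_finite_edges: "simple_graph V E \<Longrightarrow> finite E"
  unfolding simple_graph_def by (meson Pow_iff finite_Pow_iff finite_subset subsetI)

lemma simple_graph_delete_vertex:
  "simple_graph V E \<Longrightarrow> simple_graph (V - {v}) {e\<in>E. v \<notin> e}"
  unfolding simple_graph_def by auto

lemma subgraph_trans: "subgraph V'' E'' V' E' \<Longrightarrow> subgraph V' E' V E \<Longrightarrow> subgraph V'' E'' V E"
  unfolding subgraph_def by blast

lemma degenerate_subgraph:
  "degenerate d V E \<Longrightarrow> subgraph V' E' V E \<Longrightarrow> degenerate d V' E'"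
  unfolding degenerate_def by (meson subgraph_trans)

lemma degenerate_delete_vertex:
  "simple_graph V E \<Longrightarrow> degenerate d V E \<Longrightarrow> degenerate d (V - {v}) {e\<in>E. v \<notin> e}"
  by (erule degenerate_subgraph) (auto simp: subgraph_def simple_graph_def)

lemma degenerate_ex_degree_le:
  assumes "simple_graph V E" "degenerate d V E" "V \<noteq> {}"
  shows "\<exists>v\<in>V. degree E v \<le> d"
  using assms unfolding degenerate_def simple_graph_def subgraph_def by blast

lemma neighbours_subset:
  "simple_graph V E \<Longrightarrow> neighbours E v \<subseteq> V - {v}"
  unfolding simple_graph_def neighbours_def by fastforce

lemma degree_eq_card_neighbours:
  assumes "simple_graph V E"
  shows "degree E v = card (neighbours E v)"
proof -
  have "bij_betw (\<lambda>u. {v, u}) (neighbours E v) {e\<in>E. v \<in> e}"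
  proof (rule bij_betw_imageI)
    show "inj_on (\<lambda>u. {v, u}) (neighbours E v)"
      by (auto simp: inj_on_def doubleton_eq_iff)
    have "e \<in> (\<lambda>u. {v, u}) ` neighbours E v" if "e \<in> E" "v \<in> e" for e
    proof -
      obtain x y where "e = {x, y}"
        using assms \<open>e \<in> E\<close> unfolding simple_graph_def by (meson card_2_iff)
      with \<open>v \<in> e\<close> have "e = {v, if x = v then y else x}" by auto
      with \<open>e \<in> E\<close> show ?thesis unfolding neighbours_def by auto
    qed
    then show "(\<lambda>u. {v, u}) ` neighbours E v = {e\<in>E. v \<in> e}"
      unfolding neighbours_def by auto
  qed
  then show ?thesis unfolding degree_def by (simp add: bij_betw_same_card)
qed

lemma card_edges_delete_vertex:
  assumes "finite E"
  shows "card {e\<in>E. v \<notin> e} = card E - degree E v"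
proof -
  have "{e\<in>E. v \<notin> e} = E - {e\<in>E. v \<in> e}" by blast
  then show ?thesis unfolding degree_def using assms by (simp add: card_Diff_subset)
qed

lemma degree_le_card_edges: "finite E \<Longrightarrow> degree E v \<le> card E"
  unfolding degree_def by (intro card_mono) auto

lemma sum_degree_eq_twice_card_edges:
  assumes "simple_graph V E"
  shows "(\<Sum>u\<in>V. degree E u) = 2 * card E"
proof -
  have fin: "finite V" "finite E"
    using assms simple_graph_finite_edges unfolding simple_graph_def by auto
  have "(\<Sum>u\<in>V. degree E u) = (\<Sum>u\<in>V. \<Sum>e\<in>E. if u \<in> e then 1 else 0)"
    unfolding degree_def using fin
    by (auto simp: sum.If_cases intro!: sum.cong arg_cong[where f = card])
  also have "\<dots> = (\<Sum>e\<in>E. \<Sum>u\<in>V. if u \<in> e then 1 else 0)" by (rule sum.swap)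
  also have "\<dots> = (\<Sum>e\<in>E. card e)"
    using assms fin unfolding simple_graph_def
    by (intro sum.cong) (auto simp: sum.If_cases Int_absorb1 Int_absorb2 Int_commute)
  also have "\<dots> = 2 * card E"
    using assms unfolding simple_graph_def by simp
  finally show ?thesis .
qed

lemma finite_neighbours: "simple_graph V E \<Longrightarrow> finite (neighbours E v)"
  using neighbours_subset unfolding simple_graph_def by (meson finite_Diff finite_subset)

lemma min_degree_bound:
  assumes "simple_graph V E" "v \<in> V" "\<forall>u\<in>V. degree E v \<le> degree E u"
  shows "degree E v * (degree E v + 1) \<le> 2 * card E"
proof -
  let ?N = "insert v (neighbours E v)"
  have "neighbours E v \<subseteq> V - {v}"
    using assms(1) by (rule neighbours_subset)
  then have N: "?N \<subseteq> V" "v \<notin> neighbours E v"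
    using assms(2) by auto
  then have "card ?N = degree E v + 1"
    using finite_neighbours[OF assms(1)] degree_eq_card_neighbours[OF assms(1)] by simp
  have "degree E v * (degree E v + 1) = (\<Sum>u\<in>?N. degree E v)"
    using \<open>card ?N = degree E v + 1\<close> by simp
  also have "\<dots> \<le> (\<Sum>u\<in>?N. degree E u)"
    using assms(3) N(1) by (intro sum_mono) auto
  also have "\<dots> \<le> (\<Sum>u\<in>V. degree E u)"
    using assms(1) N(1) unfolding simple_graph_def by (intro sum_mono2) auto
  also have "\<dots> = 2 * card E"
    using assms(1) by (rule sum_degree_eq_twice_card_edges)
  finally show ?thesis .
qed

lemma num_cliques_delete_vertex_le:
  assumes "simple_graph V E"
  shows "num_cliques V E \<le> num_cliques (V - {v}) {e\<in>E. v \<notin> e} + 2 ^ degree E v"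
proof -
  let ?A = "{K. K \<subseteq> V \<and> clique E K \<and> v \<in> K}"
  let ?B = "{K. K \<subseteq> V - {v} \<and> clique {e\<in>E. v \<notin> e} K}"
  have "num_cliques V E = card (?A \<union> ?B)"
    unfolding num_cliques_def by (rule arg_cong[where f = card]) (auto simp: clique_def)
  also have "\<dots> \<le> card ?A + num_cliques (V - {v}) {e\<in>E. v \<notin> e}"
    unfolding num_cliques_def by (rule card_Un_le)
  finally have "num_cliques V E \<le> card ?A + num_cliques (V - {v}) {e\<in>E. v \<notin> e}" .
  moreover have "card ?A \<le> card (Pow (neighbours E v))"
  proof (rule card_inj_on_le)
    show "inj_on (\<lambda>K. K - {v}) ?A"
      unfolding inj_on_def by blast
    show "(\<lambda>K. K - {v}) ` ?A \<subseteq> Pow (neighbours E v)"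
      unfolding neighbours_def clique_def by auto
    show "finite (Pow (neighbours E v))"
      using assms by (simp add: finite_neighbours)
  qed
  moreover have "card (Pow (neighbours E v)) = 2 ^ degree E v"
    using assms by (simp add: card_Pow finite_neighbours degree_eq_card_neighbours)
  ultimately show ?thesis by linarith
qed

lemma num_cliques_le_clique_bound:
  assumes "1 \<le> d" "simple_graph V E" "degenerate d V E"
  shows "\<exists>j\<in>{1..d}. real (num_cliques V E) \<le> clique_bound j (card V) (real (card E))"
  using assms(2,3)
proof (induction "card V" arbitrary: V E)
  case 0
  then have "V = {}" "E = {}"
    unfolding simple_graph_def by (auto dest!: card_ge_0_finite)
  then have "{K. K \<subseteq> V \<and> clique E K} = {{}}"
    unfolding clique_def by auto
  then have "num_cliques V E = 1"
    unfolding num_cliques_def by simp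
  then show ?case
    using assms(1) \<open>V = {}\<close> \<open>E = {}\<close> by (intro bexI[of _ 1]) (simp_all add: clique_bound_def)
next
  case (Suc n V E)
  obtain w where "w \<in> V"
    using Suc.hyps(2) by (metis card.empty ex_in_conv nat.distinct(1))
  then obtain v where "v \<in> V" and min: "\<forall>u\<in>V. degree E v \<le> degree E u"
    using ex_has_least_nat[of "\<lambda>u. u \<in> V" w "degree E"] by blast
  define k where "k = degree E v"
  define E' where "E' = {e\<in>E. v \<notin> e}"
  have "k \<le> d"
    using degenerate_ex_degree_le[OF Suc.prems] \<open>v \<in> V\<close> min unfolding k_def by fastforce
  have "card (V - {v}) = n"
    using Suc.hyps(2) \<open>v \<in> V\<close> by simp
  then obtain j where j: "j \<in> {1..d}"
    and IH: "real (num_cliques (V - {v}) E') \<le> clique_bound j n (real (card E'))"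
    using Suc.hyps(1) simple_graph_delete_vertex[OF Suc.prems(1)]
      degenerate_delete_vertex[OF Suc.prems] unfolding E'_def by blast
  have fin: "finite E"
    using Suc.prems(1) by (rule simple_graph_finite_edges)
  have "real (card E') = real (card E) - real k"
    unfolding E'_def k_def using card_edges_delete_vertex[OF fin] degree_le_card_edges[OF fin]
    by (simp add: of_nat_diff)
  have "real (num_cliques V E) \<le> real (num_cliques (V - {v}) E' + 2 ^ k)"
    unfolding of_nat_le_iff E'_def k_def by (rule num_cliques_delete_vertex_le[OF Suc.prems(1)])
  also have "\<dots> = real (num_cliques (V - {v}) E') + 2 ^ k"
    by simp
  also have "\<dots> \<le> clique_bound j n (real (card E) - real k) + 2 ^ k"
    using IH \<open>real (card E') = real (card E) - real k\<close> by simp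
  also have "\<dots> \<le> clique_bound (max j k) (Suc n) (real (card E))"
  proof (rule clique_bound_add_vertex)
    show "1 \<le> j"
      using j by simp
    have "real (k * (k + 1)) \<le> real (2 * card E)"
      unfolding of_nat_le_iff k_def by (rule min_degree_bound[OF Suc.prems(1) \<open>v \<in> V\<close> min])
    then show "real k * (real k + 1) \<le> 2 * real (card E)"
      by (simp add: algebra_simps)
  qed
  finally show ?case
    using j \<open>k \<le> d\<close> Suc.hyps(2) by (intro bexI[of _ "max j k"]) auto
qed

theorem theorem4:
  fixes V :: "'a set" and E :: "'a set set" and d :: nat
  assumes "d \<ge> 1"
    and "simple_graph V E"
    and "degenerate d V E"
    and "card E \<ge> d choose 2"
  shows "real (num_cliques V E) \<le>
           real (card V) + (2 ^ d - 1) * real (card E) / real d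
           - ((real d - 3) * 2 ^ d + real d + 1) / 2"
proof -
  obtain j where j: "j \<in> {1..d}"
    and "real (num_cliques V E) \<le> clique_bound j (card V) (real (card E))"
    using num_cliques_le_clique_bound[OF assms(1-3)] by blast
  moreover have "real d * (real d - 1) \<le> 2 * real (card E)"
  proof -
    have "real (d * (d - 1)) \<le> real (2 * card E)"
      unfolding of_nat_le_iff using times_binomial_minus1_eq[of 2 d] assms(4) by (simp add: choose_one)
    then show ?thesis
      using assms(1) by (simp add: of_nat_diff)
  qed
  then have "clique_bound j (card V) (real (card E)) \<le> clique_bound d (card V) (real (card E))"
    using j by (intro clique_bound_mono) auto
  ultimately show ?thesis unfolding clique_bound_def by linarith
qed

end
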